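(* Let $(M_N)_{N\ge1}$ be probability measures, $M_N$ on $\mathbb{Y}(N)$, whose Jack generating functions $F_N(\mathbf p;\theta)=\sum_{\lambda\in\mathbb Y}a_{M_N}(\lambda)p_\lambda$ satisfy Assumption A with constant $\varepsilon>0$. Then for every fixed $r\ge1$ and every $N$, the series $$\sum_{i_1,\dots,i_r\ge1}\left|\frac{\partial^r\ln F_N(\mathbf p;\theta)}{\partial p_{i_1}\cdots\partial p_{i_r}}\Big|_{\mathbf p=1^N}\right|\,|x|^{i_1+\dots+i_r}$$ converges absolutely for all complex $x$ with $|x|<1+\varepsilon$.
   Context: Fix $\theta>0$. A Young diagram is a nonincreasing sequence $\lambda=(\lambda_1\ge\lambda_2\ge\dots\ge0)$ of integers with finitely many nonzero parts; $\ell(\lambda)$ is the number of nonzero parts, $|\lambda|=\sum_i\lambda_i$, $\mathbb Y(N)$ is the set of Young diagrams with $\ell(\lambda)\le N$, $\mathbb Y=\bigcup_N\mathbb Y(N)$. Symmetric functions in infinitely many variables $x_1,x_2,\dots$ are identified with $\mathbb R[p_1,p_2,\dots]$, $p_n=\sum_i x_i^n$, $p_\lambda=\prod_i p_{\lambda_i}$. $J_\lambda(\mathbf p;\theta)$ is the Jack symmetric function: the family is orthogonal for $\langle p_\lambda,p_\mu\rangle=\delta_{\lambda\mu}z_\lambda\theta^{-\ell(\lambda)}$ ($z_\lambda=\prod_i i^{m_i}m_i!$, $m_i$ = number of parts equal to $i$), $J_\lambda$ is a combination of monomial symmetric functions $m_\mu$ with $\mu$ below $\lambda$ in dominance order, and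 its leading term is $x_1^{\lambda_1}\cdots x_{\ell(\lambda)}^{\lambda_{\ell(\lambda)}}$. "$\mathbf p=1^N$" means $x_1=\dots=x_N=1$, $x_{N+1}=x_{N+2}=\dots=0$, i.e. $p_n=N$ for all $n$; $J_\lambda(1^N;\theta)>0$ for $\lambda\in\mathbb Y(N)$. The Jack generating function of a probability measure $M_N$ on $\mathbb Y(N)$ is $F_N(\mathbf p;\theta)=\sum_{\lambda\in\mathbb Y(N)}M_N(\lambda)J_\lambda(\mathbf p;\theta)/J_\lambda(1^N;\theta)$, expanded as a formal series $\sum_{\lambda\in\mathbb Y}a_{M_N}(\lambda)p_\lambda$; $F_N|_{\mathbf p=1^N}=1$ and $\ln F_N$ is understood as a series around $\mathbf p=1^N$. Assumption A: there is $\varepsilon>0$ such that for every $N$ the series $\sum_{\lambda\in\mathbb Y}|a_{M_N}(\lambda)|N^{\ell(\lambda)}|x|^{|\lambda|}$ converges for all complex $|x|<1+\varepsilon$. *)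

theory Defs
  imports "HOL-Analysis.Analysis" "HOL-Library.Multiset"
    "HOL-Probability.Probability_Mass_Function"
begin

definition is_partition :: "nat list \<Rightarrow> bool" where
  "is_partition l \<longleftrightarrow> sorted_wrt (\<ge>) l \<and> 0 \<notin> set l"

definition young :: "nat \<Rightarrow> nat list \<Rightarrow> bool" where
  "young N l \<longleftrightarrow> is_partition l \<and> length l \<le> N"

definition partitions_of :: "nat \<Rightarrow> nat list set" where
  "partitions_of n = {l. is_partition l \<and> sum_list l = n}"

text \<open>A symmetric function is represented by its coefficients \<open>f \<mu>\<close> in the
basis \<open>p_\<mu>\<close> (only partitions \<open>\<mu>\<close> are relevant).\<close>

definition zee :: "nat list \<Rightarrow> real" where
  "zee mu = (\<Prod>i\<in>set mu. real i ^ count (mset mu) i * fact (count (mset mu) i))"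

definition jack_ip :: "real \<Rightarrow> nat \<Rightarrow> (nat list \<Rightarrow> real) \<Rightarrow> (nat list \<Rightarrow> real) \<Rightarrow> real" where
  "jack_ip \<theta> n f g = (\<Sum>mu\<in>partitions_of n. f mu * g mu * zee mu / \<theta> ^ length mu)"

definition psum_eval :: "nat \<Rightarrow> (nat \<Rightarrow> real) \<Rightarrow> nat list \<Rightarrow> real" where
  "psum_eval K x mu = (\<Prod>j\<leftarrow>mu. (\<Sum>i<K. x i ^ j))"

definition sym_eval :: "nat \<Rightarrow> (nat list \<Rightarrow> real) \<Rightarrow> (nat \<Rightarrow> real) \<Rightarrow> real" where
  "sym_eval K f x = (\<Sum>mu\<in>{mu. is_partition mu \<and> f mu \<noteq> 0}. f mu * psum_eval K x mu)"

definition monomial_exps :: "nat \<Rightarrow> nat list \<Rightarrow> (nat \<Rightarrow> nat) set" where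
  "monomial_exps K mu = {\<alpha>. (\<forall>i\<ge>K. \<alpha> i = 0) \<and>
      mset (filter (\<lambda>v. v \<noteq> 0) (map \<alpha> [0..<K])) = mset mu}"

definition mono_sym :: "nat \<Rightarrow> nat list \<Rightarrow> (nat \<Rightarrow> real) \<Rightarrow> real" where
  "mono_sym K mu x = (\<Sum>\<alpha>\<in>monomial_exps K mu. \<Prod>i<K. x i ^ \<alpha> i)"

text \<open>\<open>dominates lam mu\<close>: \<open>mu\<close> is below \<open>lam\<close> in dominance order.\<close>
definition dominates :: "nat list \<Rightarrow> nat list \<Rightarrow> bool" where
  "dominates lam mu \<longleftrightarrow> sum_list mu = sum_list lam \<and>
     (\<forall>k. sum_list (take k mu) \<le> sum_list (take k lam))"

definition is_jack_family :: "real \<Rightarrow> (nat list \<Rightarrow> nat list \<Rightarrow> real) \<Rightarrow> bool" where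
  "is_jack_family \<theta> J \<longleftrightarrow>
     (\<forall>lam. \<not> is_partition lam \<longrightarrow> J lam = (\<lambda>_. 0)) \<and>
     (\<forall>lam. is_partition lam \<longrightarrow>
        (\<forall>mu. J lam mu \<noteq> 0 \<longrightarrow> mu \<in> partitions_of (sum_list lam)) \<and>
        (\<exists>c. c lam = 1 \<and>
           (\<forall>K x. sym_eval K (J lam) x =
              (\<Sum>mu\<in>{mu\<in>partitions_of (sum_list lam). dominates lam mu}. c mu * mono_sym K mu x))) \<and>
        (\<forall>mu. mu \<in> partitions_of (sum_list lam) \<and> mu \<noteq> lam \<longrightarrow>
           jack_ip \<theta> (sum_list lam) (J lam) (J mu) = 0))"

text \<open>\<open>jack \<theta> lam\<close> = coefficients of \<open>J_lam(p;\<theta>)\<close> in the power-sum basis.\<close>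
definition jack :: "real \<Rightarrow> nat list \<Rightarrow> nat list \<Rightarrow> real" where
  "jack \<theta> = (THE J. is_jack_family \<theta> J)"

definition jack_at_ones :: "real \<Rightarrow> nat \<Rightarrow> nat list \<Rightarrow> real" where
  "jack_at_ones \<theta> N lam = sym_eval N (jack \<theta> lam) (\<lambda>_. 1)"

definition jack_gf_coeff :: "real \<Rightarrow> nat list pmf \<Rightarrow> nat \<Rightarrow> nat list \<Rightarrow> real" where
  "jack_gf_coeff \<theta> M N mu =
     (\<Sum>\<^sub>\<infinity>lam\<in>{lam. young N lam}. pmf M lam * jack \<theta> lam mu / jack_at_ones \<theta> N lam)"

text \<open>A multiset \<open>A\<close> of indices encodes the differential operator
\<open>\<partial>^r/\<partial>p_{i_1}\<dots>\<partial>p_{i_r}\<close>.  \<open>gf_deriv a N A\<close> is this derivative of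
\<open>F = \<Sum>_\<lambda> a(\<lambda>) p_\<lambda>\<close> evaluated at \<open>p_n = N\<close> for all n (termwise).\<close>
definition gf_deriv :: "(nat list \<Rightarrow> real) \<Rightarrow> nat \<Rightarrow> nat multiset \<Rightarrow> real" where
  "gf_deriv a N A = (\<Sum>\<^sub>\<infinity>lam\<in>{lam. is_partition lam \<and> A \<subseteq># mset lam}.
      a lam * (\<Prod>n\<in>set_mset A. fact (count (mset lam) n) / fact (count (mset lam) n - count A n))
        * real N ^ (length lam - size A))"

definition mfact :: "nat multiset \<Rightarrow> real" where
  "mfact A = (\<Prod>n\<in>set_mset A. fact (count A n))"

text \<open>Taylor coefficient of \<open>F\<close> at \<open>1^N\<close> (in the variables \<open>q_n = p_n - N\<close>).\<close>
definition gf_taylor :: "(nat list \<Rightarrow> real) \<Rightarrow> nat \<Rightarrow> nat multiset \<Rightarrow> real" where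
  "gf_taylor a N A = gf_deriv a N A / mfact A"

text \<open>Derivative at \<open>1^N\<close> of \<open>ln F\<close>, \<open>ln F\<close> taken as the formal series
\<open>ln c_0 + \<Sum>_{k\<ge>1} (-1)^{k-1}/k ((F - c_0)/c_0)^k\<close> around \<open>p = 1^N\<close>
(here \<open>c_0 = F(1^N)\<close>); valid for a nonempty index multiset A.\<close>
definition log_gf_deriv :: "(nat list \<Rightarrow> real) \<Rightarrow> nat \<Rightarrow> nat multiset \<Rightarrow> real" where
  "log_gf_deriv a N A = mfact A *
     (\<Sum>k\<in>{1..size A}. (-1) ^ (k - 1) / real k *
        (\<Sum>Bs\<in>{Bs. length Bs = k \<and> (\<forall>B\<in>set Bs. B \<noteq> {#}) \<and> sum_list Bs = A}.
           (\<Prod>B\<leftarrow>Bs. gf_taylor a N B / gf_taylor a N {#})))"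

end

theory Submission
  imports Defs "HOL-Combinatorics.Multiset_Permutations"
begin

text \<open>Fix \<open>|x| < w < w' < 1 + \<epsilon>\<close>. Differentiating \<open>p\<^sub>\<lambda>\<close> at most \<open>r\<close> times and evaluating at
\<open>1\<^sup>N\<close> costs a factor of at most \<open>\<ell>(\<lambda>)\<^sup>r \<le> |\<lambda>|\<^sup>r\<close>, which is absorbed by \<open>(w'/w)\<^bsup>|\<lambda>|\<^esup>\<close>;
hence every Taylor coefficient of order \<open>\<le> r\<close> and degree \<open>d\<close> is \<open>O(w\<^sup>-\<^sup>d)\<close>. An \<open>r\<close>-th
derivative of \<open>ln F\<^sub>N\<close> is a polynomial in these coefficients whose shape depends only on \<open>r\<close>,
so it is \<open>O(w\<^bsup>-(i\<^sub>1+\<dots>+i\<^sub>r)\<^esup>)\<close>, and the series is dominated by the convergent geometric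
series in \<open>|x|/w\<close>.\<close>

lemma linear_le_exponential:
  fixes \<sigma> :: real
  assumes "\<sigma> > 1"
  obtains C where "\<And>n. 1 + real n \<le> C * \<sigma> ^ n"
proof -
  have "(\<lambda>n. real n * (1 / \<sigma>) ^ n) \<longlonglongrightarrow> 0"
    using assms by (intro powser_times_n_limit_0) simp
  then obtain K where K: "\<And>n. norm (real n * (1 / \<sigma>) ^ n) \<le> K"
    by (metis BseqE convergentI convergent_imp_Bseq)
  have "1 + real n \<le> (1 + K) * \<sigma> ^ n" for n
  proof -
    have "real n \<le> K * \<sigma> ^ n" using K[of n] assms by (simp add: power_one_over divide_le_eq)
    moreover have "1 \<le> \<sigma> ^ n" using assms by simp
    ultimately show ?thesis by (simp add: distrib_right)
  qed
  then show ?thesis by (rule that)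
qed

lemma polynomial_le_exponential:
  fixes \<rho> :: real
  assumes "\<rho> > 1"
  obtains C where "\<And>n. (1 + real n) ^ k \<le> C * \<rho> ^ n"
proof (cases "k = 0")
  case True
  then show ?thesis using assms by (intro that[of 1]) simp
next
  case False
  define \<sigma> where "\<sigma> = root k \<rho>"
  have \<sigma>: "\<sigma> > 1" "\<sigma> ^ k = \<rho>"
    using False assms by (auto simp: \<sigma>_def real_root_pow_pos)
  obtain C where C: "\<And>n. 1 + real n \<le> C * \<sigma> ^ n"
    using linear_le_exponential[OF \<sigma>(1)] by blast
  have "(1 + real n) ^ k \<le> C ^ k * \<rho> ^ n" for n
  proof -
    have "(1 + real n) ^ k \<le> (C * \<sigma> ^ n) ^ k" using C[of n] by (intro power_mono) auto
    also have "\<dots> = C ^ k * \<rho> ^ n" by (simp add: power_mult_distrib mult.commute flip: power_mult \<sigma>(2))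
    finally show ?thesis .
  qed
  then show ?thesis by (rule that)
qed

lemma fact_div_fact_le_power_real:
  assumes "r \<le> n"
  shows "(fact n :: real) / fact (n - r) \<le> real n ^ r"
proof -
  have "(fact n :: real) / fact (n - r) = real (fact n div fact (n - r))"
    by (simp add: real_of_nat_div fact_dvd)
  also have "\<dots> \<le> real n ^ r"
    using fact_div_fact_le_pow[OF assms] by (metis of_nat_le_iff of_nat_power)
  finally show ?thesis .
qed

lemma prod_fact_div_fact_count_le:
  assumes "B \<subseteq># mset lam"
  shows "(\<Prod>n\<in>set_mset B. fact (count (mset lam) n) / fact (count (mset lam) n - count B n) :: real)
     \<le> real (length lam) ^ size B"
proof -
  have "(\<Prod>n\<in>set_mset B. fact (count (mset lam) n) / fact (count (mset lam) n - count B n) :: real)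
     \<le> (\<Prod>n\<in>set_mset B. real (length lam) ^ count B n)"
  proof (intro prod_mono conjI)
    fix n
    have "count B n \<le> count (mset lam) n" using assms by (simp add: subseteq_mset_def)
    moreover have "count (mset lam) n \<le> length lam" by (metis count_le_size size_mset)
    ultimately show "(fact (count (mset lam) n) / fact (count (mset lam) n - count B n) :: real)
        \<le> real (length lam) ^ count B n"
      by (meson fact_div_fact_le_power_real order_trans power_mono of_nat_0_le_iff of_nat_mono)
  qed simp
  also have "\<dots> = real (length lam) ^ size B"
    by (simp add: power_sum size_multiset_overloaded_eq)
  finally show ?thesis .
qed

lemma length_le_sum_list_nonzero: "0 \<notin> set l \<Longrightarrow> length l \<le> sum_list (l :: nat list)"
  by (induction l) (auto simp: Suc_le_eq)

lemma abs_infsum_le_dominating: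
  fixes f g :: "'a \<Rightarrow> real"
  assumes g: "g summable_on B" and "A \<subseteq> B"
    and dom: "\<And>x. x \<in> A \<Longrightarrow> \<bar>f x\<bar> \<le> g x" and nonneg: "\<And>x. x \<in> B \<Longrightarrow> 0 \<le> g x"
  shows "\<bar>infsum f A\<bar> \<le> infsum g B"
proof -
  have gA: "g summable_on A" using g \<open>A \<subseteq> B\<close> by (rule summable_on_subset_banach)
  have fA: "(\<lambda>x. norm (f x)) summable_on A"
    by (rule summable_on_comparison_test[OF gA]) (auto simp: dom)
  have "\<bar>infsum f A\<bar> \<le> infsum (\<lambda>x. \<bar>f x\<bar>) A"
    using norm_infsum_bound[of f A] fA by simp
  also have "\<dots> \<le> infsum g A" using fA gA dom by (intro infsum_mono) auto
  also have "\<dots> \<le> infsum g B" using gA g \<open>A \<subseteq> B\<close> nonneg by (intro infsum_mono_neutral) auto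
  finally show ?thesis .
qed

lemma abs_gf_deriv_weighted_le:
  fixes a :: "nat list \<Rightarrow> real"
  assumes N: "N \<ge> 1" and w: "w \<ge> 1" and \<rho>: "\<rho> \<ge> 0" and B: "size B \<le> r"
    and poly: "\<And>n. (1 + real n) ^ r \<le> C * \<rho> ^ n"
    and summ: "(\<lambda>lam. \<bar>a lam\<bar> * real N ^ length lam * (\<rho> * w) ^ sum_list lam)
      summable_on {lam. is_partition lam}"
  shows "\<bar>gf_deriv a N B\<bar> * w ^ sum_mset B
     \<le> C * (\<Sum>\<^sub>\<infinity>lam\<in>{lam. is_partition lam}. \<bar>a lam\<bar> * real N ^ length lam * (\<rho> * w) ^ sum_list lam)"
proof -
  define h where "h lam = \<bar>a lam\<bar> * real N ^ length lam * (\<rho> * w) ^ sum_list lam" for lam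
  define c where "c = C / w ^ sum_mset B"
  have C: "C \<ge> 1" using poly[of 0] by simp
  have wB: "w ^ sum_mset B > 0" using w by simp
  have term_le: "\<bar>a lam * (\<Prod>n\<in>set_mset B. fact (count (mset lam) n) / fact (count (mset lam) n - count B n))
      * real N ^ (length lam - size B)\<bar> \<le> c * h lam"
    if "is_partition lam" "B \<subseteq># mset lam" for lam
  proof -
    let ?P = "\<Prod>n\<in>set_mset B. fact (count (mset lam) n) / fact (count (mset lam) n - count B n) :: real"
    define s where "s = sum_list lam"
    have "sum_mset B \<le> s"
      using that(2) unfolding s_def by (metis subset_mset.add_diff_inverse le_add1 sum_mset.union sum_mset_sum_list)
    have "length lam \<le> s"
      using that(1) length_le_sum_list_nonzero unfolding s_def is_partition_def by blast
    have "?P \<le> real (length lam) ^ size B" by (rule prod_fact_div_fact_count_le[OF that(2)])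
    also have "\<dots> \<le> (1 + real (length lam)) ^ size B" by (intro power_mono) auto
    also have "\<dots> \<le> (1 + real s) ^ r"
      using B \<open>length lam \<le> s\<close> by (intro order.trans[OF power_increasing power_mono]) auto
    also have "\<dots> \<le> C * \<rho> ^ s" by (rule poly)
    finally have P: "?P \<le> C * \<rho> ^ s" .
    have "\<bar>a lam * ?P * real N ^ (length lam - size B)\<bar> * w ^ sum_mset B
        = \<bar>a lam\<bar> * ?P * real N ^ (length lam - size B) * w ^ sum_mset B"
      by (simp add: abs_mult prod_nonneg)
    also have "\<dots> \<le> \<bar>a lam\<bar> * (C * \<rho> ^ s) * real N ^ length lam * w ^ s"
      using P N w C \<rho> \<open>sum_mset B \<le> s\<close> by (intro mult_mono power_increasing) (auto simp: prod_nonneg)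
    also have "\<dots> = C * h lam" by (simp add: h_def s_def power_mult_distrib)
    finally show ?thesis using wB by (simp add: c_def field_simps)
  qed
  have h_nonneg: "0 \<le> h lam" for lam using \<rho> w by (simp add: h_def)
  have "\<bar>gf_deriv a N B\<bar> \<le> (\<Sum>\<^sub>\<infinity>lam\<in>{lam. is_partition lam}. c * h lam)"
    unfolding gf_deriv_def
  proof (rule abs_infsum_le_dominating)
    show "(\<lambda>lam. c * h lam) summable_on {lam. is_partition lam}"
      using summ unfolding h_def by (rule summable_on_cmult_right)
    show "0 \<le> c * h lam" for lam using C wB h_nonneg by (simp add: c_def)
  qed (use term_le in auto)
  also have "\<dots> = c * (\<Sum>\<^sub>\<infinity>lam\<in>{lam. is_partition lam}. h lam)" by (rule infsum_cmult_right')
  finally show ?thesis using wB by (simp add: c_def h_def field_simps)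
qed

lemma mfact_ge_1: "1 \<le> mfact A"
  unfolding mfact_def by (intro prod_ge_1) simp

lemma mfact_le_fact_size: "mfact A \<le> fact (size A)"
proof -
  have "(\<Prod>n\<in>set_mset A. fact (count A n)) dvd (fact (size A) :: nat)"
    using card_permutations_of_multiset_aux[of A] by (metis dvd_triv_right)
  then have "(\<Prod>n\<in>set_mset A. fact (count A n)) \<le> (fact (size A) :: nat)"
    by (rule dvd_imp_le) simp
  then have "real (\<Prod>n\<in>set_mset A. fact (count A n)) \<le> real (fact (size A))"
    by (rule of_nat_mono)
  then show ?thesis unfolding mfact_def by simp
qed

lemma abs_gf_taylor_le: "\<bar>gf_taylor a N B\<bar> \<le> \<bar>gf_deriv a N B\<bar>"
  using mfact_ge_1[of B] unfolding gf_taylor_def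
  by (simp add: divide_le_eq mult_le_cancel_left1)

lemma submultiset_in_mset_subseqs: "B \<subseteq># mset xs \<Longrightarrow> B \<in> mset ` set (subseqs xs)"
proof (induction xs arbitrary: B)
  case (Cons x xs)
  show ?case
  proof (cases "x \<in># B")
    case True
    then have "B - {#x#} \<subseteq># mset xs" using Cons.prems
      by (metis insert_DiffM add_mset_remove_trivial insert_subset_eq_iff mset.simps(2))
    from Cons.IH[OF this] obtain ys where "ys \<in> set (subseqs xs)" "mset ys = B - {#x#}" by auto
    then show ?thesis using True
      by (auto simp: Let_def image_iff intro!: bexI[of _ "x # ys"])
  next
    case False
    then have "B \<subseteq># mset xs" using Cons.prems
      by (metis mset.simps(2) inter_add_left1 subset_mset.inf.absorb_iff2)
    from Cons.IH[OF this] show ?thesis by (auto simp: Let_def)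
  qed
qed simp

lemma submultisets_mset_subset: "{B. B \<subseteq># mset xs} \<subseteq> mset ` set (subseqs xs)"
  using submultiset_in_mset_subseqs by blast

lemma finite_submultisets: "finite {B. B \<subseteq># A}"
  by (metis ex_mset finite_imageI finite_set finite_subset submultisets_mset_subset)

lemma card_submultisets_le: "card {B. B \<subseteq># A} \<le> 2 ^ size A"
proof -
  obtain xs where A: "A = mset xs" using ex_mset by metis
  have "card {B. B \<subseteq># A} \<le> card (mset ` set (subseqs xs))"
    unfolding A by (intro card_mono submultisets_mset_subset) simp
  also have "\<dots> \<le> length (subseqs xs)" by (metis card_image_le card_length finite_set order.trans)
  finally show ?thesis by (simp add: A length_subseqs)
qed

lemma mem_sum_list_subset_mset: "B \<in> set Bs \<Longrightarrow> B \<subseteq># sum_list Bs"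
  by (induction Bs) (auto intro: subset_mset.add_increasing2 subset_mset.add_increasing)

lemma abs_prod_list_weighted_le:
  fixes T :: "nat multiset \<Rightarrow> real"
  assumes "\<And>B. B \<in> set Bs \<Longrightarrow> \<bar>T B\<bar> * w ^ sum_mset B \<le> K" and "w \<ge> 0" and "K \<ge> 0"
  shows "\<bar>\<Prod>B\<leftarrow>Bs. T B\<bar> * w ^ sum_mset (sum_list Bs) \<le> K ^ length Bs"
  using assms(1)
proof (induction Bs)
  case (Cons B Bs)
  have "\<bar>\<Prod>B\<leftarrow>B # Bs. T B\<bar> * w ^ sum_mset (sum_list (B # Bs))
      = (\<bar>T B\<bar> * w ^ sum_mset B) * (\<bar>\<Prod>B\<leftarrow>Bs. T B\<bar> * w ^ sum_mset (sum_list Bs))"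
    by (simp add: abs_mult power_add)
  also have "\<dots> \<le> K * K ^ length Bs"
    using Cons assms(2,3) by (intro mult_mono) auto
  finally show ?case by simp
qed simp

lemma card_compositions_le:
  "card {Bs. length Bs = k \<and> (\<forall>B\<in>set Bs. B \<noteq> {#}) \<and> sum_list Bs = A} \<le> (2 ^ size A) ^ k"
proof -
  have "{Bs. length Bs = k \<and> (\<forall>B\<in>set Bs. B \<noteq> {#}) \<and> sum_list Bs = A}
      \<subseteq> {Bs. set Bs \<subseteq> {B. B \<subseteq># A} \<and> length Bs = k}"
    using mem_sum_list_subset_mset by fastforce
  then have "card {Bs. length Bs = k \<and> (\<forall>B\<in>set Bs. B \<noteq> {#}) \<and> sum_list Bs = A}
      \<le> card {Bs. set Bs \<subseteq> {B. B \<subseteq># A} \<and> length Bs = k}"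
    by (intro card_mono finite_lists_length_eq finite_submultisets)
  also have "\<dots> = card {B. B \<subseteq># A} ^ k" by (intro card_lists_length_eq finite_submultisets)
  also have "\<dots> \<le> (2 ^ size A) ^ k" by (intro power_mono card_submultisets_le) simp
  finally show ?thesis .
qed

lemma abs_sum_compositions_weighted_le:
  fixes T :: "nat multiset \<Rightarrow> real"
  assumes T: "\<And>B. B \<subseteq># A \<Longrightarrow> \<bar>T B\<bar> * w ^ sum_mset B \<le> K" and w: "w \<ge> 0" and K: "K \<ge> 0"
  shows "\<bar>\<Sum>Bs\<in>{Bs. length Bs = k \<and> (\<forall>B\<in>set Bs. B \<noteq> {#}) \<and> sum_list Bs = A}. \<Prod>B\<leftarrow>Bs. T B\<bar>
      * w ^ sum_mset A \<le> (2 ^ size A * K) ^ k"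
proof -
  define S where "S = {Bs. length Bs = k \<and> (\<forall>B\<in>set Bs. B \<noteq> {#}) \<and> sum_list Bs = A}"
  have "\<bar>\<Sum>Bs\<in>S. \<Prod>B\<leftarrow>Bs. T B\<bar> * w ^ sum_mset A \<le> (\<Sum>Bs\<in>S. \<bar>\<Prod>B\<leftarrow>Bs. T B\<bar> * w ^ sum_mset A)"
    unfolding sum_distrib_right[symmetric] using w by (intro mult_right_mono sum_abs) auto
  also have "\<dots> \<le> of_nat (card S) * K ^ k"
  proof (rule sum_bounded_above)
    fix Bs assume "Bs \<in> S"
    then have Bs: "sum_list Bs = A" "length Bs = k" by (auto simp: S_def)
    have "\<bar>T B\<bar> * w ^ sum_mset B \<le> K" if "B \<in> set Bs" for B
      using T mem_sum_list_subset_mset[OF that] Bs by simp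
    then show "\<bar>\<Prod>B\<leftarrow>Bs. T B\<bar> * w ^ sum_mset A \<le> K ^ k"
      using abs_prod_list_weighted_le[of Bs T w K] w K Bs by simp
  qed
  also have "\<dots> \<le> (2 ^ size A) ^ k * K ^ k"
  proof -
    have "real (card S) \<le> (2 ^ size A) ^ k"
      using of_nat_mono[OF card_compositions_le[of k A]] unfolding S_def by simp
    then show ?thesis using K by (intro mult_right_mono) auto
  qed
  finally show ?thesis unfolding S_def by (simp add: power_mult_distrib)
qed

text \<open>No hypothesis \<open>gf_taylor a N {#} \<noteq> 0\<close> is needed: if it vanishes, both sides are \<open>0\<close>
because \<open>x / 0 = 0\<close>.\<close>
lemma abs_log_gf_deriv_weighted_le:
  fixes a :: "nat list \<Rightarrow> real"
  assumes w: "w \<ge> 0" and K: "K \<ge> 0"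
    and taylor: "\<And>B. B \<subseteq># A \<Longrightarrow> \<bar>gf_taylor a N B\<bar> * w ^ sum_mset B \<le> K"
  shows "\<bar>log_gf_deriv a N A\<bar> * w ^ sum_mset A
     \<le> fact (size A) * (\<Sum>k=1..size A. (2 ^ size A * (K / \<bar>gf_taylor a N {#}\<bar>)) ^ k)"
proof -
  define c where "c = gf_taylor a N {#}"
  define X where "X k = (\<Sum>Bs\<in>{Bs. length Bs = k \<and> (\<forall>B\<in>set Bs. B \<noteq> {#}) \<and> sum_list Bs = A}.
      \<Prod>B\<leftarrow>Bs. gf_taylor a N B / c)" for k
  have X: "\<bar>X k\<bar> * w ^ sum_mset A \<le> (2 ^ size A * (K / \<bar>c\<bar>)) ^ k" for k
    unfolding X_def
  proof (rule abs_sum_compositions_weighted_le)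
    fix B assume "B \<subseteq># A"
    have "\<bar>gf_taylor a N B / c\<bar> * w ^ sum_mset B = \<bar>gf_taylor a N B\<bar> * w ^ sum_mset B / \<bar>c\<bar>"
      by simp
    also have "\<dots> \<le> K / \<bar>c\<bar>" using taylor[OF \<open>B \<subseteq># A\<close>] by (rule divide_right_mono) simp
    finally show "\<bar>gf_taylor a N B / c\<bar> * w ^ sum_mset B \<le> K / \<bar>c\<bar>" .
  qed (use w K in auto)
  have alternating: "\<bar>\<Sum>k=1..size A. (-1) ^ (k - 1) / real k * X k\<bar> \<le> (\<Sum>k=1..size A. \<bar>X k\<bar>)"
  proof -
    have "\<bar>\<Sum>k=1..size A. (-1) ^ (k - 1) / real k * X k\<bar>
        \<le> (\<Sum>k=1..size A. \<bar>(-1) ^ (k - 1) / real k * X k\<bar>)" by (rule sum_abs)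
    also have "\<dots> \<le> (\<Sum>k=1..size A. \<bar>X k\<bar>)"
      by (intro sum_mono) (auto simp: abs_mult power_abs divide_le_eq mult_le_cancel_left1)
    finally show ?thesis .
  qed
  have "\<bar>log_gf_deriv a N A\<bar> * w ^ sum_mset A
      = mfact A * (\<bar>\<Sum>k=1..size A. (-1) ^ (k - 1) / real k * X k\<bar> * w ^ sum_mset A)"
    using mfact_ge_1[of A] by (simp add: log_gf_deriv_def X_def c_def abs_mult)
  also have "\<dots> \<le> fact (size A) * ((\<Sum>k=1..size A. \<bar>X k\<bar>) * w ^ sum_mset A)"
    using mfact_le_fact_size[of A] alternating w by (intro mult_mono mult_right_mono) auto
  also have "\<dots> \<le> fact (size A) * (\<Sum>k=1..size A. (2 ^ size A * (K / \<bar>c\<bar>)) ^ k)"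
    unfolding sum_distrib_right by (intro mult_left_mono sum_mono X) auto
  finally show ?thesis by (simp add: c_def)
qed

lemma power_sum_list_eq_prod_list: "x ^ sum_list ns = (\<Prod>n\<leftarrow>ns. x ^ n)"
  by (induction ns) (auto simp: power_add)

lemma sum_lists_length_eq_prod_list:
  fixes f :: "'a \<Rightarrow> 'b :: comm_semiring_1"
  assumes "finite S"
  shows "(\<Sum>xs\<in>{xs. set xs \<subseteq> S \<and> length xs = r}. \<Prod>x\<leftarrow>xs. f x) = sum f S ^ r"
proof (induction r)
  case 0
  have "{xs. set xs \<subseteq> S \<and> length xs = 0} = {[]}" by auto
  then show ?case by simp
next
  case (Suc r)
  have "(\<Sum>xs\<in>{xs. set xs \<subseteq> S \<and> length xs = Suc r}. \<Prod>x\<leftarrow>xs. f x)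
      = (\<Sum>(xs, x)\<in>{xs. set xs \<subseteq> S \<and> length xs = r} \<times> S. f x * (\<Prod>x\<leftarrow>xs. f x))"
    unfolding lists_length_Suc_eq by (subst sum.reindex) (auto simp: inj_on_def case_prod_beta)
  also have "\<dots> = sum f S * (\<Sum>xs\<in>{xs. set xs \<subseteq> S \<and> length xs = r}. \<Prod>x\<leftarrow>xs. f x)"
    by (simp add: sum.cartesian_product[symmetric] sum_distrib_left sum_distrib_right sum.swap[of _ S])
  finally show ?case using Suc by simp
qed

lemma sum_power_sum_list_le:
  fixes q :: real
  assumes q: "0 \<le> q" "q < 1" and F: "finite F" "\<And>ns. ns \<in> F \<Longrightarrow> length ns = r"
  shows "(\<Sum>ns\<in>F. q ^ sum_list ns) \<le> (1 / (1 - q)) ^ r"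
proof -
  define m where "m = Max (insert 0 (\<Union>ns\<in>F. set ns))"
  define L where "L = {ns. set ns \<subseteq> {..m} \<and> length ns = r}"
  have "F \<subseteq> L"
    using F unfolding L_def m_def by (auto intro: Max_ge)
  have "(\<Sum>ns\<in>F. q ^ sum_list ns) \<le> (\<Sum>ns\<in>L. q ^ sum_list ns)"
    using \<open>F \<subseteq> L\<close> q by (intro sum_mono2) (auto simp: L_def finite_lists_length_eq)
  also have "\<dots> = (\<Sum>n\<le>m. q ^ n) ^ r"
    unfolding L_def power_sum_list_eq_prod_list by (rule sum_lists_length_eq_prod_list) simp
  also have "\<dots> \<le> (1 / (1 - q)) ^ r"
  proof -
    have "(\<Sum>n\<le>m. q ^ n) \<le> (\<Sum>n. q ^ n)"
      using q by (intro sum_le_suminf summable_geometric) auto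
    then show ?thesis using q by (intro power_mono sum_nonneg) (auto simp: suminf_geometric)
  qed
  finally show ?thesis .
qed

lemma summable_on_power_sum_list:
  fixes q :: real
  assumes "0 \<le> q" "q < 1"
  shows "(\<lambda>ns. q ^ sum_list ns) summable_on {ns. length ns = r}"
  using assms
  by (intro nonneg_bdd_above_summable_on bdd_aboveI2[where M = "(1 / (1 - q)) ^ r"])
    (auto intro: sum_power_sum_list_le)

lemma summable_on_abs_log_gf_deriv:
  fixes a :: "nat list \<Rightarrow> real" and y R :: real
  assumes N: "N \<ge> 1" and y: "0 \<le> y" "y < R" and R: "R > 1"
    and summ: "\<And>z. 0 \<le> z \<Longrightarrow> z < R \<Longrightarrow>
      (\<lambda>lam. \<bar>a lam\<bar> * real N ^ length lam * z ^ sum_list lam) summable_on {lam. is_partition lam}"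
  shows "(\<lambda>ns. \<bar>log_gf_deriv a N (mset ns)\<bar> * y ^ sum_list ns) summable_on {ns. length ns = r}"
proof -
  define w where "w = max 1 ((y + R) / 2)"
  define w' where "w' = (w + R) / 2"
  have w: "1 \<le> w" "y < w" "w < w'" "w' < R"
    using y R by (auto simp: w_def w'_def max_def)
  obtain C where C: "\<And>n. (1 + real n) ^ r \<le> C * (w' / w) ^ n"
    using polynomial_le_exponential[of "w' / w"] w by auto
  define K where
    "K = C * (\<Sum>\<^sub>\<infinity>lam\<in>{lam. is_partition lam}. \<bar>a lam\<bar> * real N ^ length lam * w' ^ sum_list lam)"
  have K: "K \<ge> 0"
    using C[of 0] w unfolding K_def by (intro mult_nonneg_nonneg infsum_nonneg) auto
  have taylor: "\<bar>gf_taylor a N B\<bar> * w ^ sum_mset B \<le> K" if "size B \<le> r" for B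
  proof -
    have "\<bar>gf_taylor a N B\<bar> * w ^ sum_mset B \<le> \<bar>gf_deriv a N B\<bar> * w ^ sum_mset B"
      using w by (intro mult_right_mono abs_gf_taylor_le) auto
    also have "\<dots> \<le> K"
      using abs_gf_deriv_weighted_le[of N w "w' / w" B r C a] N that C summ[of w'] w
      unfolding K_def by simp
    finally show ?thesis .
  qed
  define D where "D = fact r * (\<Sum>k=1..r. (2 ^ r * (K / \<bar>gf_taylor a N {#}\<bar>)) ^ k)"
  define q where "q = y / w"
  have q: "0 \<le> q" "q < 1" using y w by (auto simp: q_def)
  have bound: "\<bar>log_gf_deriv a N (mset ns)\<bar> * y ^ sum_list ns \<le> D * q ^ sum_list ns"
    if ns: "length ns = r" for ns
  proof -
    have "\<bar>gf_taylor a N B\<bar> * w ^ sum_mset B \<le> K" if "B \<subseteq># mset ns" for B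
      using taylor size_mset_mono[OF that] ns by simp
    then have "\<bar>log_gf_deriv a N (mset ns)\<bar> * w ^ sum_list ns \<le> D"
      using abs_log_gf_deriv_weighted_le[of w K "mset ns" a N] w K ns
      unfolding D_def by (simp add: sum_mset_sum_list)
    then have "(\<bar>log_gf_deriv a N (mset ns)\<bar> * w ^ sum_list ns) * q ^ sum_list ns \<le> D * q ^ sum_list ns"
      using q by (intro mult_right_mono) auto
    then show ?thesis using w by (simp add: q_def power_divide)
  qed
  show ?thesis
  proof (rule summable_on_comparison_test)
    show "(\<lambda>ns. D * q ^ sum_list ns) summable_on {ns. length ns = r}"
      using summable_on_power_sum_list[OF q] by (rule summable_on_cmult_right)
  qed (use bound y in auto)
qed

theorem proposition2p1:
  fixes \<theta> \<epsilon> :: real and M :: "nat \<Rightarrow> nat list pmf"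
  assumes "\<theta> > 0" and "\<epsilon> > 0"
    and "\<forall>N\<ge>1. set_pmf (M N) \<subseteq> {lam. young N lam}"
    and "\<forall>N\<ge>1. \<forall>x::complex. cmod x < 1 + \<epsilon> \<longrightarrow>
           (\<lambda>mu. \<bar>jack_gf_coeff \<theta> (M N) N mu\<bar> * real N ^ length mu * cmod x ^ sum_list mu)
             summable_on {mu. is_partition mu}"
  shows "\<forall>r\<ge>1. \<forall>N\<ge>1. \<forall>x::complex. cmod x < 1 + \<epsilon> \<longrightarrow>
           (\<lambda>is. \<bar>log_gf_deriv (jack_gf_coeff \<theta> (M N) N) N (mset is)\<bar> * cmod x ^ sum_list is)
             summable_on {is. length is = r \<and> (\<forall>i\<in>set is. 1 \<le> i)}"
proof (intro allI impI)
  fix r N :: nat and x :: complex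
  assume "r \<ge> 1" and N: "N \<ge> 1" and x: "cmod x < 1 + \<epsilon>"
  have "(\<lambda>is. \<bar>log_gf_deriv (jack_gf_coeff \<theta> (M N) N) N (mset is)\<bar> * cmod x ^ sum_list is)
      summable_on {is. length is = r}"
  proof (rule summable_on_abs_log_gf_deriv[OF N _ x])
    fix z :: real
    assume z: "0 \<le> z" "z < 1 + \<epsilon>"
    then have "cmod (complex_of_real z) < 1 + \<epsilon>" by simp
    with assms(4) N have "(\<lambda>mu. \<bar>jack_gf_coeff \<theta> (M N) N mu\<bar> * real N ^ length mu
        * cmod (complex_of_real z) ^ sum_list mu) summable_on {mu. is_partition mu}" by blast
    then show "(\<lambda>mu. \<bar>jack_gf_coeff \<theta> (M N) N mu\<bar> * real N ^ length mu * z ^ sum_list mu)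
        summable_on {mu. is_partition mu}" using z by simp
  qed (use assms(2) in auto)
  then show "(\<lambda>is. \<bar>log_gf_deriv (jack_gf_coeff \<theta> (M N) N) N (mset is)\<bar> * cmod x ^ sum_list is)
      summable_on {is. length is = r \<and> (\<forall>i\<in>set is. 1 \<le> i)}"
    by (rule summable_on_subset_banach) auto
qed

end
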